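(* Let $N\ge 1$, let $\beta$ be a non-negative integer, and let $\mathbb{C}[x]=\mathbb{C}[x_1,\dots,x_N]$. For $Q$ in the algebra $\mathcal{H}_0'$ (defined in the context) and every $f\in\mathbb{C}[x]$, $$\sigma^A(Qf)=\rho^A(Q)\,\sigma^A(f).$$
   Context: Operators on $\mathbb{C}[x]$: $s_{ij}$ ($i\neq j$) swaps $x_i$ and $x_j$ in the argument of a function. The Dunkl operators are $D^A_j=\frac{\partial}{\partial x_j}+\beta\sum_{k\neq j}\frac{1-s_{jk}}{x_j-x_k}$, and the Cherednik operators are $\hat D^A_j=x_jD^A_j+\beta\sum_{k<j}s_{jk}$ ($j=1,\dots,N$). $\mathcal{H}_0'$ denotes the algebra of operators on $\mathbb{C}[x]$ generated by the $\hat D^A_j$ and the $s_{ij}$. Define $\tilde a^{\dagger}_j=\frac{1}{\sqrt2}\left(-D^A_j+2x_j\right)$ and $\tilde a_j=\frac{1}{\sqrt2}D^A_j$ (these are the conjugates $e^{\sum_k x_k^2/2}\circ\frac{1}{\sqrt2}(\mp D^A_j+x_j)\circ e^{-\sum_k x_k^2/2}$); the $\tilde a^\dagger_j$ mutually commute. $\rho^A$ denotes the algebra homomorphism from the operator algebra generated by $x_j$, $D^A_j$, $s_{ij}$ into the operators on $\mathbb{C}[x]$ determined by $\rho^A(x_j)=\tilde a^\dagger_j$, $\rho^A(D^A_j)=\tilde a_j$, $\rho^A(s_{ij})=s_{ij}$; in particular $\rho^A(\hat D^A_j)=\tilde a^\dagger_j\tilde a_j+\beta\sum_{k<j}s_{jk}$.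 The linear map $\sigma^A:\mathbb{C}[x]\to\mathbb{C}[x]$ is $\sigma^A(f)=f(\tilde a^\dagger_1,\dots,\tilde a^\dagger_N)\cdot 1$. *)

theory Defs
  imports Complex_Main "HOL-Library.Poly_Mapping"
begin

text \<open>Polynomials in C[x_1,...,x_N]: finitely supported maps from monomials
  (exponent vectors nat =>0 nat, variable x_i has index i, 1 <= i <= N) to complex
  coefficients.\<close>

type_synonym mpoly = "(nat \<Rightarrow>\<^sub>0 nat) \<Rightarrow>\<^sub>0 complex"

definition vars :: "mpoly \<Rightarrow> nat set" where
  "vars f = (\<Union>m\<in>Poly_Mapping.keys f. Poly_Mapping.keys m)"

definition var :: "nat \<Rightarrow> mpoly" where
  "var j = Poly_Mapping.single (Poly_Mapping.single j 1) 1"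

definition smult :: "complex \<Rightarrow> mpoly \<Rightarrow> mpoly" where
  "smult c f = Poly_Mapping.map (\<lambda>a. c * a) f"

definition pderiv :: "nat \<Rightarrow> mpoly \<Rightarrow> mpoly" where
  "pderiv j f = Abs_poly_mapping
     (\<lambda>(m::nat \<Rightarrow>\<^sub>0 nat). of_nat (Poly_Mapping.lookup m j + 1) * Poly_Mapping.lookup f (m + Poly_Mapping.single j 1))"

definition transp :: "nat \<Rightarrow> nat \<Rightarrow> nat \<Rightarrow> nat" where
  "transp j k i = (if i = j then k else if i = k then j else i)"

definition swap_mon :: "nat \<Rightarrow> nat \<Rightarrow> (nat \<Rightarrow>\<^sub>0 nat) \<Rightarrow> (nat \<Rightarrow>\<^sub>0 nat)" where
  "swap_mon j k m = Abs_poly_mapping (\<lambda>(i::nat). Poly_Mapping.lookup m (transp j k i))"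

definition swapP :: "nat \<Rightarrow> nat \<Rightarrow> mpoly \<Rightarrow> mpoly" where
  "swapP j k f = Abs_poly_mapping (\<lambda>(m::nat \<Rightarrow>\<^sub>0 nat). Poly_Mapping.lookup f (swap_mon j k m))"

definition divdiff :: "nat \<Rightarrow> nat \<Rightarrow> mpoly \<Rightarrow> mpoly" where
  "divdiff j k f = (THE g. (var j - var k) * g = f - swapP j k f)"

definition dunkl :: "nat \<Rightarrow> nat \<Rightarrow> nat \<Rightarrow> mpoly \<Rightarrow> mpoly" where
  "dunkl N \<beta> j f = pderiv j f
     + smult (of_nat \<beta>) (\<Sum>k\<in>{1..N} - {j}. divdiff j k f)"

definition cherednik :: "nat \<Rightarrow> nat \<Rightarrow> nat \<Rightarrow> mpoly \<Rightarrow> mpoly" where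
  "cherednik N \<beta> j f = var j * dunkl N \<beta> j f
     + smult (of_nat \<beta>) (\<Sum>k\<in>{1..<j}. swapP j k f)"

definition adag :: "nat \<Rightarrow> nat \<Rightarrow> nat \<Rightarrow> mpoly \<Rightarrow> mpoly" where
  "adag N \<beta> j f = smult (1 / complex_of_real (sqrt 2))
      (- dunkl N \<beta> j f + smult 2 (var j * f))"

definition ann :: "nat \<Rightarrow> nat \<Rightarrow> nat \<Rightarrow> mpoly \<Rightarrow> mpoly" where
  "ann N \<beta> j f = smult (1 / complex_of_real (sqrt 2)) (dunkl N \<beta> j f)"

definition rho_cherednik :: "nat \<Rightarrow> nat \<Rightarrow> nat \<Rightarrow> mpoly \<Rightarrow> mpoly" where
  "rho_cherednik N \<beta> j f = adag N \<beta> j (ann N \<beta> j f)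
     + smult (of_nat \<beta>) (\<Sum>k\<in>{1..<j}. swapP j k f)"

definition adag_mon :: "nat \<Rightarrow> nat \<Rightarrow> (nat \<Rightarrow>\<^sub>0 nat) \<Rightarrow> mpoly \<Rightarrow> mpoly" where
  "adag_mon N \<beta> m = foldr (\<lambda>j acc. (adag N \<beta> j ^^ Poly_Mapping.lookup m j) \<circ> acc) [1..<Suc N] id"

definition sigmaA :: "nat \<Rightarrow> nat \<Rightarrow> mpoly \<Rightarrow> mpoly" where
  "sigmaA N \<beta> f = (\<Sum>m\<in>Poly_Mapping.keys f. smult (Poly_Mapping.lookup f m) (adag_mon N \<beta> m 1))"

text \<open>Elements of the algebra H_0' are represented by expressions in its generators
  (hat D^A_j, s_ij); ev gives the operator, ev_rho its image under rho^A.\<close>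
datatype opexp =
    Cher nat
  | Swp nat nat
  | Ident
  | Comp opexp opexp
  | Add opexp opexp
  | Scal complex opexp

fun wf_op :: "nat \<Rightarrow> opexp \<Rightarrow> bool" where
  "wf_op N (Cher j) = (1 \<le> j \<and> j \<le> N)"
| "wf_op N (Swp i j) = (1 \<le> i \<and> i \<le> N \<and> 1 \<le> j \<and> j \<le> N \<and> i \<noteq> j)"
| "wf_op N Ident = True"
| "wf_op N (Comp a b) = (wf_op N a \<and> wf_op N b)"
| "wf_op N (Add a b) = (wf_op N a \<and> wf_op N b)"
| "wf_op N (Scal c a) = wf_op N a"

fun ev :: "nat \<Rightarrow> nat \<Rightarrow> opexp \<Rightarrow> mpoly \<Rightarrow> mpoly" where
  "ev N \<beta> (Cher j) f = cherednik N \<beta> j f"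
| "ev N \<beta> (Swp i j) f = swapP i j f"
| "ev N \<beta> Ident f = f"
| "ev N \<beta> (Comp a b) f = ev N \<beta> a (ev N \<beta> b f)"
| "ev N \<beta> (Add a b) f = ev N \<beta> a f + ev N \<beta> b f"
| "ev N \<beta> (Scal c a) f = smult c (ev N \<beta> a f)"

fun ev_rho :: "nat \<Rightarrow> nat \<Rightarrow> opexp \<Rightarrow> mpoly \<Rightarrow> mpoly" where
  "ev_rho N \<beta> (Cher j) f = rho_cherednik N \<beta> j f"
| "ev_rho N \<beta> (Swp i j) f = swapP i j f"
| "ev_rho N \<beta> Ident f = f"
| "ev_rho N \<beta> (Comp a b) f = ev_rho N \<beta> a (ev_rho N \<beta> b f)"
| "ev_rho N \<beta> (Add a b) f = ev_rho N \<beta> a f + ev_rho N \<beta> b f"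
| "ev_rho N \<beta> (Scal c a) f = smult c (ev_rho N \<beta> a f)"

end

theory Submission
  imports Defs
begin

(*
  sigma^A is the linear map with sigma(1) = 1 and sigma(x_l f) = tilde a^dagger_l sigma(f); this is
  consistent because the tilde a^dagger_l commute, which rests on the commutativity of the Dunkl
  operators.  The tilde a^dagger_l transform under the swaps exactly like the x_l, so sigma commutes
  with the swaps.  The commutator [D_j, x_l] is an operator c_jl built from swaps, and
  [tilde a_j, tilde a^dagger_l] is the same c_jl; since D_j and tilde a_j both annihilate constants,
  induction on f gives sigma(D_j f) = tilde a_j sigma(f).  The Cherednik operators are built from the
  x_j, the D_j and the swaps, so the theorem follows by induction on the expression for Q.
*)

abbreviation lookup :: "('a \<Rightarrow>\<^sub>0 'b::zero) \<Rightarrow> 'a \<Rightarrow> 'b" where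
  "lookup \<equiv> Poly_Mapping.lookup"

abbreviation keys :: "('a \<Rightarrow>\<^sub>0 'b::zero) \<Rightarrow> 'a set" where
  "keys \<equiv> Poly_Mapping.keys"

abbreviation const_poly :: "complex \<Rightarrow> mpoly" where
  "const_poly c \<equiv> Poly_Mapping.single 0 c"

abbreviation var_exp :: "nat \<Rightarrow> (nat \<Rightarrow>\<^sub>0 nat)" where
  "var_exp l \<equiv> Poly_Mapping.single l 1"

section \<open>Polynomials\<close>

lemma lookup_single_mult:
  fixes f :: "'a::cancel_comm_monoid_add \<Rightarrow>\<^sub>0 'b::comm_semiring_1"
  shows "lookup (Poly_Mapping.single k v * f) m = v * Sum_any (\<lambda>q. lookup f q when m = k + q)"
  by (simp add: lookup_mult lookup_single when_mult)

lemma lookup_single_mult_add: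
  fixes f :: "'a::cancel_comm_monoid_add \<Rightarrow>\<^sub>0 'b::comm_semiring_1"
  shows "lookup (Poly_Mapping.single k v * f) (k + q) = v * lookup f q"
  unfolding lookup_single_mult by simp

lemma lookup_single_mult_eq_0:
  fixes f :: "'a::cancel_comm_monoid_add \<Rightarrow>\<^sub>0 'b::comm_semiring_1"
  shows "(\<And>q. m \<noteq> k + q) \<Longrightarrow> lookup (Poly_Mapping.single k v * f) m = 0"
  unfolding lookup_single_mult by simp

lemma lookup_const_poly_mult: "lookup (const_poly c * f) m = c * lookup f m"
  using lookup_single_mult_add[of 0 c f m] by simp

lemma const_poly_mult: "const_poly (a * b) = const_poly a * const_poly b"
  by (simp add: mult_single)

lemma smult_eq_const_poly_mult: "smult c f = const_poly c * f"
  unfolding smult_def by (rule mult_map_scale_conv_mult)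

lemma var_exp_add_diff:
  fixes m :: "nat \<Rightarrow>\<^sub>0 nat"
  assumes "0 < lookup m l"
  shows "m = var_exp l + (m - var_exp l)"
  by (rule poly_mapping_eqI) (use assms in \<open>auto simp: lookup_add lookup_minus lookup_single when_def\<close>)

lemma var_exp_add_neq:
  fixes m :: "nat \<Rightarrow>\<^sub>0 nat"
  assumes "lookup m l = 0"
  shows "m \<noteq> var_exp l + q"
  using assms by (auto simp: lookup_add)

lemma lookup_var_exp_add: "lookup (var_exp l + m) = (lookup m)(l := Suc (lookup m l))"
  by (auto simp: fun_eq_iff lookup_add lookup_single)

lemma var_mult_single: "var l * Poly_Mapping.single m c = Poly_Mapping.single (var_exp l + m) c"
  unfolding var_def by (simp add: mult_single)

lemma var_diff_var_neq_0:
  assumes "j \<noteq> k"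
  shows "var j - var k \<noteq> 0"
proof
  assume "var j - var k = 0"
  then have "lookup (var j) (var_exp j) = lookup (var k) (var_exp j)" by simp
  then have "var_exp k = var_exp j" unfolding var_def by (simp add: lookup_single when_def split: if_splits)
  then have "lookup (var_exp k) j = lookup (var_exp j) j" by simp
  with assms show False by (simp add: lookup_single)
qed

lemma mpoly_monom_expansion: "(f::mpoly) = (\<Sum>m\<in>keys f. Poly_Mapping.single m (lookup f m))"
proof (rule poly_mapping_eqI)
  fix m
  have "lookup (\<Sum>m\<in>keys f. Poly_Mapping.single m (lookup f m)) m = (\<Sum>m'\<in>keys f. lookup f m' when m' = m)"
    by (simp add: lookup_sum lookup_single)
  also have "\<dots> = lookup f m"
    by (cases "m \<in> keys f") (auto simp: when_def in_keys_iff)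
  finally show "lookup f m = lookup (\<Sum>m\<in>keys f. Poly_Mapping.single m (lookup f m)) m" by simp
qed

lemma mpoly_induct [case_names const add var]:
  assumes const: "\<And>c. P (const_poly c)"
    and add: "\<And>f g. P f \<Longrightarrow> P g \<Longrightarrow> P (f + g)"
    and var: "\<And>l f. P f \<Longrightarrow> P (var l * f)"
  shows "P f"
proof -
  have monom: "P (Poly_Mapping.single m c)" for m c
  proof (induction m arbitrary: c rule: update_induct)
    case const then show ?case using assms(1) by simp
  next
    case (update g a b)
    have "P (Poly_Mapping.single (g + Poly_Mapping.single a n) c)" for n c
    proof (induction n arbitrary: c)
      case 0 then show ?case using update.IH by simp
    next
      case (Suc n)
      have "g + Poly_Mapping.single a (Suc n) = var_exp a + (g + Poly_Mapping.single a n)"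
        by (simp add: single_add[symmetric] add_ac)
      then show ?case using var[OF Suc.IH, of a] by (simp add: var_mult_single)
    qed
    moreover have "Poly_Mapping.update a b g = g + Poly_Mapping.single a b"
      by (rule poly_mapping_eqI)
        (use update.hyps(1) in \<open>auto simp: lookup_update lookup_add lookup_single when_def in_keys_iff\<close>)
    ultimately show ?case by simp
  qed
  have "P (\<Sum>m\<in>S. Poly_Mapping.single m (lookup f m))" if "finite S" for S
    using that by (induction S rule: finite_induct) (use const[of 0] add monom in simp_all)
  then show ?thesis by (subst mpoly_monom_expansion) simp
qed

definition lin_op :: "(mpoly \<Rightarrow> mpoly) \<Rightarrow> bool" where
  "lin_op T \<longleftrightarrow> (\<forall>f g. T (f + g) = T f + T g) \<and> (\<forall>c f. T (const_poly c * f) = const_poly c * T f)"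

lemma lin_opI:
  "(\<And>f g. T (f + g) = T f + T g) \<Longrightarrow> (\<And>c f. T (const_poly c * f) = const_poly c * T f) \<Longrightarrow> lin_op T"
  by (simp add: lin_op_def)

context
  fixes T :: "mpoly \<Rightarrow> mpoly"
  assumes T: "lin_op T"
begin

lemma lin_op_add: "T (f + g) = T f + T g"
  using T by (simp add: lin_op_def)

lemma lin_op_const_poly_mult: "T (const_poly c * f) = const_poly c * T f"
  using T by (simp add: lin_op_def)

lemma lin_op_of_nat_mult: "T (of_nat n * f) = of_nat n * T f"
  using lin_op_const_poly_mult[of "of_nat n" f] by simp

lemma lin_op_numeral_mult: "T (numeral n * f) = numeral n * T f"
  using lin_op_const_poly_mult[of "numeral n" f] by simp

lemma lin_op_zero: "T 0 = 0"
  using lin_op_const_poly_mult[of 0 0] by simp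

lemma lin_op_uminus: "T (- f) = - T f"
  using lin_op_const_poly_mult[of "-1" f] by (simp add: single_uminus)

lemma lin_op_diff: "T (f - g) = T f - T g"
  by (metis diff_conv_add_uminus lin_op_add lin_op_uminus)

lemma lin_op_sum: "T (sum F S) = (\<Sum>x\<in>S. T (F x))"
  by (induction S rule: infinite_finite_induct) (auto simp: lin_op_zero lin_op_add)

end

lemmas lin_op_simps = lin_op_add lin_op_diff lin_op_uminus lin_op_zero
  lin_op_const_poly_mult lin_op_of_nat_mult lin_op_numeral_mult

lemma lin_op_plus: "lin_op T \<Longrightarrow> lin_op U \<Longrightarrow> lin_op (\<lambda>f. T f + U f)"
  by (simp add: lin_op_def algebra_simps)

lemma lin_op_of_nat_mult_op: "lin_op T \<Longrightarrow> lin_op (\<lambda>f. of_nat n * T f)"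
  by (simp add: lin_op_def algebra_simps)

lemma lin_op_sum_op: "(\<And>k. k \<in> S \<Longrightarrow> lin_op (T k)) \<Longrightarrow> lin_op (\<lambda>f. \<Sum>k\<in>S. T k f)"
  by (simp add: lin_op_def sum.distrib sum_distrib_left)

lemma transp_transp [simp]: "transp j k (transp j k i) = i"
  by (simp add: transp_def)

lemma transp_commute: "transp j k = transp k j"
  by (auto simp: transp_def fun_eq_iff)

lemma transp_eq_iff [simp]: "transp j k a = transp j k b \<longleftrightarrow> a = b"
  by (metis transp_transp)

lemma transp_left [simp]: "transp j k j = k"
  and transp_right [simp]: "transp j k k = j"
  by (auto simp: transp_def)

lemma transp_other: "i \<noteq> j \<Longrightarrow> i \<noteq> k \<Longrightarrow> transp j k i = i"
  by (auto simp: transp_def)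

lemma transp_conj: "transp a b (transp c d (transp a b i)) = transp (transp a b c) (transp a b d) i"
  unfolding transp_def by presburger

lemma transp_mem_iff:
  "a \<in> {1..N} \<Longrightarrow> b \<in> {1..N} \<Longrightarrow> transp a b i \<in> {1..N} \<longleftrightarrow> i \<in> {1..(N::nat)}"
  unfolding transp_def by (cases "i = a"; cases "i = b") auto

lemma transp_image_remove:
  assumes "a \<in> {1..N}" "b \<in> {1..N}"
  shows "transp a b ` ({1..N} - {j}) = {1..N} - {transp a b j}"
proof -
  have "transp a b ` {1..N} = {1..N}" using assms by (auto simp: transp_def)
  moreover have "inj (transp a b)" by (rule injI) simp
  ultimately show ?thesis by (simp add: image_set_diff)
qed

lemma lookup_swap_mon: "lookup (swap_mon j k m) i = lookup m (transp j k i)"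
proof -
  have "{i. lookup m (transp j k i) \<noteq> 0} = transp j k -` keys m"
    by (auto simp: in_keys_iff)
  then have "finite {i. lookup m (transp j k i) \<noteq> 0}"
    using finite_vimageI[OF finite_keys, of "transp j k"] by (simp add: inj_def)
  then show ?thesis unfolding swap_mon_def by simp
qed

lemma swap_mon_swap_mon [simp]: "swap_mon j k (swap_mon j k m) = m"
  by (rule poly_mapping_eqI) (simp add: lookup_swap_mon)

lemma swap_mon_add: "swap_mon j k (a + b) = swap_mon j k a + swap_mon j k b"
  by (rule poly_mapping_eqI) (simp add: lookup_swap_mon lookup_add)

lemma swap_mon_zero [simp]: "swap_mon j k 0 = 0"
  by (rule poly_mapping_eqI) (simp add: lookup_swap_mon)

lemma swap_mon_var_exp: "swap_mon j k (var_exp l) = var_exp (transp j k l)"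
  by (rule poly_mapping_eqI) (auto simp: lookup_swap_mon lookup_single when_def)

lemma lookup_swapP: "lookup (swapP j k f) m = lookup f (swap_mon j k m)"
proof -
  have "{m. lookup f (swap_mon j k m) \<noteq> 0} = swap_mon j k -` keys f"
    by (auto simp: in_keys_iff)
  moreover have "inj (swap_mon j k)" by (metis injI swap_mon_swap_mon)
  ultimately have "finite {m. lookup f (swap_mon j k m) \<noteq> 0}"
    using finite_vimageI[OF finite_keys] by simp
  then show ?thesis unfolding swapP_def by simp
qed

lemma swapP_commute: "swapP j k = swapP k j"
proof -
  have "swap_mon j k = swap_mon k j" unfolding swap_mon_def by (simp add: transp_commute)
  then show ?thesis unfolding swapP_def by simp
qed

lemma swapP_single_mult:
  "swapP j k (Poly_Mapping.single a v * f) = Poly_Mapping.single (swap_mon j k a) v * swapP j k f"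
proof (rule poly_mapping_eqI)
  fix m
  show "lookup (swapP j k (Poly_Mapping.single a v * f)) m
      = lookup (Poly_Mapping.single (swap_mon j k a) v * swapP j k f) m"
  proof (cases "\<exists>q. m = swap_mon j k a + q")
    case True
    then obtain q where q: "m = swap_mon j k a + q" by blast
    then have "swap_mon j k m = a + swap_mon j k q" by (simp add: swap_mon_add)
    then show ?thesis using q by (simp add: lookup_swapP lookup_single_mult_add)
  next
    case False
    have "swap_mon j k m \<noteq> a + q" for q
      using False by (metis swap_mon_add swap_mon_swap_mon)
    then show ?thesis using False by (simp add: lookup_swapP lookup_single_mult_eq_0)
  qed
qed

lemma swapP_one: "swapP j k 1 = 1"
  by (rule poly_mapping_eqI)
    (simp add: lookup_swapP lookup_one when_def, metis swap_mon_swap_mon swap_mon_zero)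

lemma swapP_const_poly: "swapP j k (const_poly c) = const_poly c"
  using swapP_single_mult[of j k 0 c 1] by (simp add: swapP_one)

lemma swapP_var_mult: "swapP j k (var l * f) = var (transp j k l) * swapP j k f"
  unfolding var_def swapP_single_mult swap_mon_var_exp ..

lemma lin_op_swapP: "lin_op (swapP j k)"
proof (rule lin_opI)
  show "swapP j k (f + g) = swapP j k f + swapP j k g" for f g
    by (rule poly_mapping_eqI) (simp add: lookup_swapP lookup_add)
  show "swapP j k (const_poly c * f) = const_poly c * swapP j k f" for c f
    using swapP_single_mult[of j k 0 c f] by simp
qed

lemma swapP_swapP_conj:
  "swapP a b (swapP c d g) = swapP (transp a b c) (transp a b d) (swapP a b g)"
proof (rule poly_mapping_eqI)
  fix m
  have "swap_mon c d (swap_mon a b m) = swap_mon a b (swap_mon (transp a b c) (transp a b d) m)"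
    by (rule poly_mapping_eqI) (simp add: lookup_swap_mon transp_conj[symmetric])
  then show "lookup (swapP a b (swapP c d g)) m
      = lookup (swapP (transp a b c) (transp a b d) (swapP a b g)) m"
    by (simp add: lookup_swapP)
qed

lemma lookup_pderiv: "lookup (pderiv j f) m = of_nat (lookup m j + 1) * lookup f (m + var_exp j)"
proof -
  have inj: "inj (\<lambda>m::nat \<Rightarrow>\<^sub>0 nat. m + var_exp j)" by (simp add: inj_def)
  have "{m. of_nat (lookup m j + 1) * lookup f (m + var_exp j) \<noteq> (0::complex)}
      \<subseteq> (\<lambda>m. m + var_exp j) -` keys f"
    by (auto simp: in_keys_iff)
  then have "finite {m. of_nat (lookup m j + 1) * lookup f (m + var_exp j) \<noteq> (0::complex)}"
    using finite_vimageI[OF finite_keys inj] finite_subset by blast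
  then show ?thesis unfolding pderiv_def by simp
qed

lemma lin_op_pderiv: "lin_op (pderiv j)"
proof (rule lin_opI)
  show "pderiv j (f + g) = pderiv j f + pderiv j g" for f g
    by (rule poly_mapping_eqI) (simp add: lookup_pderiv lookup_add distrib_left)
  show "pderiv j (const_poly c * f) = const_poly c * pderiv j f" for c f
    by (rule poly_mapping_eqI) (simp only: lookup_pderiv lookup_const_poly_mult mult.left_commute)
qed

lemma pderiv_const_poly: "pderiv j (const_poly c) = 0"
proof (rule poly_mapping_eqI)
  fix m
  have "lookup (m + var_exp j) j \<noteq> 0" by (simp add: lookup_add)
  then have "m + var_exp j \<noteq> 0" by auto
  then show "lookup (pderiv j (const_poly c)) m = lookup 0 m"
    by (simp add: lookup_pderiv lookup_single when_def)
qed

lemma pderiv_var_mult: "pderiv j (var l * f) = var l * pderiv j f + (if l = j then f else 0)"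
proof (rule poly_mapping_eqI)
  fix m
  show "lookup (pderiv j (var l * f)) m = lookup (var l * pderiv j f + (if l = j then f else 0)) m"
  proof (cases "0 < lookup m l")
    case True
    define q where "q = m - var_exp l"
    have m: "m = var_exp l + q" using var_exp_add_diff[OF True] q_def by simp
    have m_j: "m + var_exp j = var_exp l + (q + var_exp j)" by (simp only: m add_ac)
    have L: "lookup (pderiv j (var l * f)) m = of_nat (lookup m j + 1) * lookup f (q + var_exp j)"
      unfolding lookup_pderiv m_j var_def lookup_single_mult_add by simp
    have R: "lookup (var l * pderiv j f) m = of_nat (lookup q j + 1) * lookup f (q + var_exp j)"
      unfolding m var_def lookup_single_mult_add lookup_pderiv by simp
    show ?thesis
      using L R m by (cases "l = j") (simp_all add: lookup_add lookup_single add_ac algebra_simps)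
  next
    case False
    then have m: "lookup m l = 0" by simp
    have R: "lookup (var l * pderiv j f) m = 0"
      unfolding var_def using var_exp_add_neq[OF m] by (rule lookup_single_mult_eq_0)
    show ?thesis
    proof (cases "l = j")
      case True
      have m_j: "m + var_exp j = var_exp l + m" using True by (simp only: add_ac)
      have "lookup (pderiv j (var l * f)) m = lookup f m"
        unfolding lookup_pderiv m_j var_def lookup_single_mult_add using True m by simp
      then show ?thesis using R True by (simp add: lookup_add)
    next
      case False
      have m_j: "lookup (m + var_exp j) l = 0" using m False by (simp add: lookup_add lookup_single)
      have "lookup (pderiv j (var l * f)) m = 0"
        unfolding lookup_pderiv var_def lookup_single_mult_eq_0[OF var_exp_add_neq[OF m_j]] by simp
      then show ?thesis using R False by (simp add: lookup_add)
    qed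
  qed
qed

lemma swapP_pderiv: "swapP a b (pderiv j f) = pderiv (transp a b j) (swapP a b f)"
proof (rule poly_mapping_eqI)
  fix m
  have "swap_mon a b (m + var_exp (transp a b j)) = swap_mon a b m + var_exp j"
    by (simp only: swap_mon_add swap_mon_var_exp transp_transp)
  then show "lookup (swapP a b (pderiv j f)) m = lookup (pderiv (transp a b j) (swapP a b f)) m"
    by (simp add: lookup_swapP lookup_pderiv lookup_swap_mon)
qed

section \<open>Divided differences\<close>

definition transp_coeff :: "nat \<Rightarrow> nat \<Rightarrow> nat \<Rightarrow> complex" where
  "transp_coeff j k l = (if l = j then 1 else if l = k then -1 else 0)"

lemma var_diff_var_transp:
  "j \<noteq> k \<Longrightarrow> var l - var (transp j k l) = (var j - var k) * const_poly (transp_coeff j k l)"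
  by (auto simp: transp_coeff_def transp_def single_uminus)

lemma var_mult_diff_swapP:
  assumes "j \<noteq> k" "(var j - var k) * g = f - swapP j k f"
  shows "(var j - var k) * (var l * g + const_poly (transp_coeff j k l) * swapP j k f)
       = var l * f - swapP j k (var l * f)"
proof -
  have "var l * f - swapP j k (var l * f)
      = var l * (f - swapP j k f) + (var l - var (transp j k l)) * swapP j k f"
    unfolding swapP_var_mult by (simp add: algebra_simps)
  also have "\<dots> = var l * ((var j - var k) * g) + (var l - var (transp j k l)) * swapP j k f"
    by (simp only: assms(2))
  finally show ?thesis
    using assms(1) by (simp add: var_diff_var_transp algebra_simps)
qed

lemma divdiff_exists: "j \<noteq> k \<Longrightarrow> \<exists>g. (var j - var k) * g = f - swapP j k f"
proof (induction f rule: mpoly_induct)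
  case (const c) then show ?case by (intro exI[of _ 0]) (simp add: swapP_const_poly)
next
  case (add f g)
  then obtain a b where "(var j - var k) * a = f - swapP j k f" "(var j - var k) * b = g - swapP j k g"
    by blast
  then show ?case by (intro exI[of _ "a + b"]) (simp add: distrib_left lin_op_add[OF lin_op_swapP])
next
  case (var l f)
  then obtain g where "(var j - var k) * g = f - swapP j k f" by blast
  then show ?case using var_mult_diff_swapP[OF var.prems] by blast
qed

lemma divdiff_unique: "j \<noteq> k \<Longrightarrow> (var j - var k) * g = f - swapP j k f \<Longrightarrow> divdiff j k f = g"
  unfolding divdiff_def by (rule the_equality) (simp, metis mult_left_cancel var_diff_var_neq_0)

lemma var_diff_mult_divdiff: "j \<noteq> k \<Longrightarrow> (var j - var k) * divdiff j k f = f - swapP j k f"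
  using divdiff_exists divdiff_unique by metis

lemma lin_op_divdiff:
  assumes "j \<noteq> k"
  shows "lin_op (divdiff j k)"
proof (rule lin_opI)
  show "divdiff j k (f + g) = divdiff j k f + divdiff j k g" for f g
    by (rule divdiff_unique[OF assms])
      (simp add: distrib_left var_diff_mult_divdiff[OF assms] lin_op_add[OF lin_op_swapP])
  show "divdiff j k (const_poly c * f) = const_poly c * divdiff j k f" for c f
    by (rule divdiff_unique[OF assms])
      (simp add: mult.left_commute[of _ "const_poly c"] var_diff_mult_divdiff[OF assms]
        lin_op_const_poly_mult[OF lin_op_swapP] right_diff_distrib)
qed

lemma divdiff_const_poly: "j \<noteq> k \<Longrightarrow> divdiff j k (const_poly c) = 0"
  by (rule divdiff_unique) (simp_all add: swapP_const_poly)

lemma divdiff_var_mult: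
  "j \<noteq> k \<Longrightarrow> divdiff j k (var l * f) = var l * divdiff j k f + const_poly (transp_coeff j k l) * swapP j k f"
  by (rule divdiff_unique) (simp_all add: var_mult_diff_swapP var_diff_mult_divdiff)

lemma swapP_divdiff:
  assumes "j \<noteq> k"
  shows "swapP a b (divdiff j k f) = divdiff (transp a b j) (transp a b k) (swapP a b f)"
proof (rule sym, rule divdiff_unique)
  show "transp a b j \<noteq> transp a b k" using assms by simp
  have "(var (transp a b j) - var (transp a b k)) * swapP a b (divdiff j k f)
      = swapP a b ((var j - var k) * divdiff j k f)"
    by (simp only: left_diff_distrib lin_op_diff[OF lin_op_swapP] swapP_var_mult)
  also have "\<dots> = swapP a b f - swapP a b (swapP j k f)"
    by (simp only: var_diff_mult_divdiff[OF assms] lin_op_diff[OF lin_op_swapP])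
  also have "swapP a b (swapP j k f) = swapP (transp a b j) (transp a b k) (swapP a b f)"
    by (rule swapP_swapP_conj)
  finally show "(var (transp a b j) - var (transp a b k)) * swapP a b (divdiff j k f)
      = swapP a b f - swapP (transp a b j) (transp a b k) (swapP a b f)" .
qed

section \<open>Dunkl operators\<close>

context
  fixes N \<beta> :: nat
begin

abbreviation D :: "nat \<Rightarrow> mpoly \<Rightarrow> mpoly" where
  "D \<equiv> dunkl N \<beta>"

definition dunkl_commutator :: "nat \<Rightarrow> nat \<Rightarrow> mpoly \<Rightarrow> mpoly" where
  "dunkl_commutator j l f =
    (if l = j then f + of_nat \<beta> * (\<Sum>k\<in>{1..N} - {j}. swapP j k f)
     else if l \<in> {1..N} then - (of_nat \<beta> * swapP j l f) else 0)"

lemma dunkl_eq: "D j f = pderiv j f + of_nat \<beta> * (\<Sum>k\<in>{1..N} - {j}. divdiff j k f)"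
  unfolding dunkl_def smult_eq_const_poly_mult by simp

lemma lin_op_dunkl: "lin_op (D j)"
proof -
  have "lin_op (\<lambda>f. pderiv j f + of_nat \<beta> * (\<Sum>k\<in>{1..N} - {j}. divdiff j k f))"
    by (intro lin_op_plus lin_op_pderiv lin_op_of_nat_mult_op lin_op_sum_op lin_op_divdiff) auto
  then show ?thesis unfolding dunkl_eq[abs_def] .
qed

lemma dunkl_const_poly: "D j (const_poly c) = 0"
  unfolding dunkl_eq by (simp add: pderiv_const_poly divdiff_const_poly)

lemma sum_transp_coeff_swapP:
  "(\<Sum>k\<in>{1..N} - {j}. const_poly (transp_coeff j k l) * swapP j k f)
   = (if l = j then (\<Sum>k\<in>{1..N} - {j}. swapP j k f) else if l \<in> {1..N} then - swapP j l f else 0)"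
proof (cases "l = j")
  case False
  then have "(\<Sum>k\<in>{1..N} - {j}. const_poly (transp_coeff j k l) * swapP j k f)
      = (\<Sum>k\<in>{1..N} - {j}. if k = l then - swapP j l f else 0)"
    by (intro sum.cong) (auto simp: transp_coeff_def single_uminus)
  with False show ?thesis by (simp add: sum.delta')
qed (simp add: transp_coeff_def)

lemma dunkl_var_mult: "D j (var l * f) = var l * D j f + dunkl_commutator j l f"
proof -
  have "(\<Sum>k\<in>{1..N} - {j}. divdiff j k (var l * f))
      = var l * (\<Sum>k\<in>{1..N} - {j}. divdiff j k f)
        + (\<Sum>k\<in>{1..N} - {j}. const_poly (transp_coeff j k l) * swapP j k f)"
    by (simp add: divdiff_var_mult sum.distrib sum_distrib_left)
  then show ?thesis
    unfolding dunkl_eq pderiv_var_mult sum_transp_coeff_swapP dunkl_commutator_def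
    by (simp add: algebra_simps)
qed

lemma swapP_dunkl:
  assumes "a \<in> {1..N}" "b \<in> {1..N}"
  shows "swapP a b (D j f) = D (transp a b j) (swapP a b f)"
proof -
  have "swapP a b (\<Sum>k\<in>{1..N} - {j}. divdiff j k f)
      = (\<Sum>k\<in>{1..N} - {j}. divdiff (transp a b j) (transp a b k) (swapP a b f))"
    by (simp add: lin_op_sum[OF lin_op_swapP] swapP_divdiff)
  also have "\<dots> = (\<Sum>k\<in>transp a b ` ({1..N} - {j}). divdiff (transp a b j) k (swapP a b f))"
    by (rule sum.reindex[symmetric, unfolded comp_def]) (simp add: inj_on_def)
  also have "\<dots> = (\<Sum>k\<in>{1..N} - {transp a b j}. divdiff (transp a b j) k (swapP a b f))"
    using transp_image_remove[OF assms] by simp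
  finally show ?thesis
    unfolding dunkl_eq by (simp add: lin_op_simps[OF lin_op_swapP] swapP_pderiv)
qed

lemma dunkl_swapP:
  assumes "a \<in> {1..N}" "b \<in> {1..N}"
  shows "D i (swapP a b g) = swapP a b (D (transp a b i) g)"
  using swapP_dunkl[OF assms, of "transp a b i" g] by simp

lemma dunkl_commutator_eq_0: "l \<notin> {1..N} \<Longrightarrow> j \<in> {1..N} \<Longrightarrow> dunkl_commutator j l f = 0"
  unfolding dunkl_commutator_def by auto

lemma dunkl_commutator_neq:
  "l \<in> {1..N} \<Longrightarrow> l \<noteq> j \<Longrightarrow> dunkl_commutator j l f = - (of_nat \<beta> * swapP j l f)"
  unfolding dunkl_commutator_def by auto

lemma dunkl_commutator_diag:
  "dunkl_commutator j j f = f + of_nat \<beta> * (\<Sum>k\<in>{1..N} - {j}. swapP j k f)"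
  unfolding dunkl_commutator_def by auto

lemma dunkl_commutator_commute:
  "j \<in> {1..N} \<Longrightarrow> k \<in> {1..N} \<Longrightarrow> dunkl_commutator j k f = dunkl_commutator k j f"
  by (cases "j = k") (simp_all add: dunkl_commutator_neq swapP_commute)

lemma dunkl_commutator_exchange_diag:
  assumes "j \<in> {1..N}" "k \<in> {1..N}" "j \<noteq> k"
  shows "dunkl_commutator j j (D k f) + D j (dunkl_commutator k j f)
       = dunkl_commutator k j (D j f) + D k (dunkl_commutator j j f)"
proof -
  let ?S = "{1..N} - {j}"
  have k: "k \<in> ?S" using assms by auto
  have "D j (dunkl_commutator k j f) = - (of_nat \<beta> * D j (swapP k j f))"
    using assms by (simp add: dunkl_commutator_neq lin_op_simps[OF lin_op_dunkl])
  also have "D j (swapP k j f) = swapP j k (D k f)"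
    using dunkl_swapP[OF assms(2,1), of j f] by (simp add: swapP_commute)
  finally have 1: "D j (dunkl_commutator k j f) = - (of_nat \<beta> * swapP j k (D k f))" .
  have 2: "dunkl_commutator k j (D j f) = - (of_nat \<beta> * swapP j k (D j f))"
    using assms by (simp add: dunkl_commutator_neq swapP_commute)
  have "D k (\<Sum>m\<in>?S. swapP j m f) = (\<Sum>m\<in>?S. swapP j m (D (transp j m k) f))"
    using assms by (auto simp: lin_op_sum[OF lin_op_dunkl] intro!: sum.cong dunkl_swapP)
  also have "\<dots> = swapP j k (D j f) + (\<Sum>m\<in>?S - {k}. swapP j m (D (transp j m k) f))"
    using k by (simp add: sum.remove)
  also have "(\<Sum>m\<in>?S - {k}. swapP j m (D (transp j m k) f)) = (\<Sum>m\<in>?S - {k}. swapP j m (D k f))"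
    using assms by (intro sum.cong) (auto simp: transp_other)
  finally have 3: "D k (\<Sum>m\<in>?S. swapP j m f)
      = swapP j k (D j f) + (\<Sum>m\<in>?S - {k}. swapP j m (D k f))" .
  have 4: "(\<Sum>m\<in>?S. swapP j m (D k f)) = swapP j k (D k f) + (\<Sum>m\<in>?S - {k}. swapP j m (D k f))"
    using k by (simp add: sum.remove)
  show ?thesis
    unfolding 1 2 dunkl_commutator_diag lin_op_simps[OF lin_op_dunkl] 3 4
    by (simp add: algebra_simps)
qed

text \<open>The identity that carries \<open>D\<^sub>j D\<^sub>k f = D\<^sub>k D\<^sub>j f\<close> over to \<open>x\<^sub>l f\<close>.\<close>

lemma dunkl_commutator_exchange:
  assumes j: "j \<in> {1..N}" and k: "k \<in> {1..N}"
  shows "dunkl_commutator j l (D k f) + D j (dunkl_commutator k l f)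
       = dunkl_commutator k l (D j f) + D k (dunkl_commutator j l f)"
proof (cases "l \<in> {1..N}")
  case False
  then show ?thesis using assms by (simp add: dunkl_commutator_eq_0 lin_op_zero[OF lin_op_dunkl])
next
  case l: True
  consider "j = k" | "j \<noteq> k" "l = j" | "j \<noteq> k" "l = k" | "l \<noteq> j" "l \<noteq> k" by blast
  then show ?thesis
  proof cases
    case 2 then show ?thesis using dunkl_commutator_exchange_diag[OF j k] by simp
  next
    case 3 then show ?thesis using dunkl_commutator_exchange_diag[OF k j] by simp
  next
    case 4
    have "D i (swapP m l f) = swapP m l (D i f)" if "i \<in> {1..N}" "m \<in> {1..N}" "i \<noteq> m" "i \<noteq> l" for i m
      using dunkl_swapP[OF that(2) l, of i f] that by (simp add: transp_other)
    then show ?thesis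
      using assms l 4 by (cases "j = k") (simp_all add: dunkl_commutator_neq lin_op_simps[OF lin_op_dunkl])
  qed simp
qed

lemma dunkl_commute:
  assumes "j \<in> {1..N}" "k \<in> {1..N}"
  shows "D j (D k f) = D k (D j f)"
proof (induction f rule: mpoly_induct)
  case (const c) then show ?case by (simp add: dunkl_const_poly lin_op_zero[OF lin_op_dunkl])
next
  case (add f g) then show ?case by (simp add: lin_op_add[OF lin_op_dunkl])
next
  case (var l f)
  have "D j (D k (var l * f))
      = var l * D j (D k f) + (dunkl_commutator j l (D k f) + D j (dunkl_commutator k l f))"
    and "D k (D j (var l * f))
      = var l * D k (D j f) + (dunkl_commutator k l (D j f) + D k (dunkl_commutator j l f))"
    by (simp_all add: dunkl_var_mult lin_op_add[OF lin_op_dunkl] add_ac)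
  then show ?case
    unfolding var.IH dunkl_commutator_exchange[OF assms, of l f] by simp
qed

section \<open>The operators \<open>tilde a\<^sub>j\<close> and \<open>tilde a\<^sup>\<dagger>\<^sub>j\<close>\<close>

abbreviation inv_sqrt2 :: mpoly where
  "inv_sqrt2 \<equiv> const_poly (1 / complex_of_real (sqrt 2))"

lemma inv_sqrt2_sq: "inv_sqrt2 * inv_sqrt2 * 2 = 1"
proof -
  have "(1 / complex_of_real (sqrt 2)) * (1 / complex_of_real (sqrt 2)) * 2 = 1"
    by (simp flip: of_real_mult)
  then show ?thesis by (metis mult_single single_numeral single_one add_0)
qed

lemma adag_eq: "adag N \<beta> j f = inv_sqrt2 * (2 * (var j * f) - D j f)"
  unfolding adag_def smult_eq_const_poly_mult by (simp add: algebra_simps)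

lemma ann_eq: "ann N \<beta> j f = inv_sqrt2 * D j f"
  unfolding ann_def smult_eq_const_poly_mult ..

lemma lin_op_adag: "lin_op (adag N \<beta> j)"
  by (rule lin_opI) (simp_all only: adag_eq lin_op_simps[OF lin_op_dunkl], simp_all add: algebra_simps)

lemma lin_op_ann: "lin_op (ann N \<beta> j)"
  by (rule lin_opI) (simp_all only: ann_eq lin_op_simps[OF lin_op_dunkl], simp_all add: algebra_simps)

lemma swapP_adag:
  assumes "a \<in> {1..N}" "b \<in> {1..N}"
  shows "swapP a b (adag N \<beta> j f) = adag N \<beta> (transp a b j) (swapP a b f)"
  unfolding adag_eq by (simp only: lin_op_simps[OF lin_op_swapP] swapP_var_mult swapP_dunkl[OF assms])

lemma adag_adag_expand:
  "adag N \<beta> j (adag N \<beta> k f) = inv_sqrt2 * inv_sqrt2 * (4 * (var j * (var k * f))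
     - 2 * (var j * D k f) - 2 * (var k * D j f) - 2 * dunkl_commutator j k f + D j (D k f))"
  unfolding adag_eq
  by (simp only: lin_op_simps[OF lin_op_dunkl] dunkl_var_mult) (simp add: algebra_simps)

lemma adag_commute:
  assumes "j \<in> {1..N}" "k \<in> {1..N}"
  shows "adag N \<beta> j (adag N \<beta> k f) = adag N \<beta> k (adag N \<beta> j f)"
  unfolding adag_adag_expand dunkl_commutator_commute[OF assms] dunkl_commute[OF assms]
  by (simp add: algebra_simps)

lemma ann_adag:
  assumes "j \<in> {1..N}" "l \<in> {1..N}"
  shows "ann N \<beta> j (adag N \<beta> l f) = adag N \<beta> l (ann N \<beta> j f) + dunkl_commutator j l f"
proof -
  have "ann N \<beta> j (adag N \<beta> l f) - adag N \<beta> l (ann N \<beta> j f)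
      = (inv_sqrt2 * inv_sqrt2 * 2) * dunkl_commutator j l f"
    unfolding adag_eq ann_eq
    by (simp only: lin_op_simps[OF lin_op_dunkl] dunkl_var_mult dunkl_commute[OF assms])
      (simp add: algebra_simps)
  then show ?thesis unfolding inv_sqrt2_sq by (simp add: algebra_simps)
qed

end

definition funpow_prod :: "('i \<Rightarrow> 'a \<Rightarrow> 'a) \<Rightarrow> ('i \<Rightarrow> nat) \<Rightarrow> 'i list \<Rightarrow> 'a \<Rightarrow> 'a" where
  "funpow_prod T n xs = foldr (\<lambda>j acc. (T j ^^ n j) \<circ> acc) xs id"

lemma funpow_prod_Nil [simp]: "funpow_prod T n [] = id"
  by (simp add: funpow_prod_def)

lemma funpow_prod_Cons [simp]: "funpow_prod T n (a # xs) = (T a ^^ n a) \<circ> funpow_prod T n xs"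
  by (simp add: funpow_prod_def)

lemma funpow_prod_eq_id: "(\<And>j. j \<in> set xs \<Longrightarrow> n j = 0) \<Longrightarrow> funpow_prod T n xs = id"
  by (induction xs) auto

lemma funpow_prod_update_notin: "l \<notin> set xs \<Longrightarrow> funpow_prod T (n(l := k)) xs = funpow_prod T n xs"
  by (induction xs) auto

lemma funpow_commute:
  assumes "\<And>x. S (T x) = T (S x)"
  shows "S ((T ^^ k) x) = (T ^^ k) (S x)"
  by (induction k) (simp_all add: assms)

lemma funpow_prod_update_Suc:
  assumes "distinct xs" "l \<in> set xs" "\<And>j x. j \<in> set xs \<Longrightarrow> T l (T j x) = T j (T l x)"
  shows "funpow_prod T (n(l := Suc (n l))) xs = T l \<circ> funpow_prod T n xs"
  using assms
proof (induction xs)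
  case (Cons a xs)
  show ?case
  proof (cases "a = l")
    case True
    with Cons.prems(1) have "funpow_prod T (n(l := Suc (n l))) xs = funpow_prod T n xs"
      by (intro funpow_prod_update_notin) simp
    with True show ?thesis by (simp only: funpow_prod_Cons fun_upd_same funpow.simps(2) comp_assoc)
  next
    case False
    have "T l ((T a ^^ n a) x) = (T a ^^ n a) (T l x)" for x
      by (rule funpow_commute) (use Cons.prems(3) in auto)
    with False Cons show ?thesis by (simp add: fun_eq_iff)
  qed
qed simp

section \<open>The map \<open>\<sigma>\<^sup>A\<close>\<close>

context
  fixes N \<beta> :: nat
begin

abbreviation \<sigma> :: "mpoly \<Rightarrow> mpoly" where
  "\<sigma> \<equiv> sigmaA N \<beta>"

lemma adag_mon_eq_funpow_prod: "adag_mon N \<beta> m = funpow_prod (adag N \<beta>) (lookup m) [1..<Suc N]"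
  unfolding adag_mon_def funpow_prod_def ..

lemma adag_mon_zero: "adag_mon N \<beta> 0 = id"
  unfolding adag_mon_eq_funpow_prod by (rule funpow_prod_eq_id) simp

lemma adag_mon_var_exp_add:
  "l \<in> {1..N} \<Longrightarrow> adag_mon N \<beta> (var_exp l + m) = adag N \<beta> l \<circ> adag_mon N \<beta> m"
  unfolding adag_mon_eq_funpow_prod lookup_var_exp_add
  by (rule funpow_prod_update_Suc) (auto intro: adag_commute)

lemma adag_mon_var_exp_add_notin:
  "l \<notin> {1..N} \<Longrightarrow> adag_mon N \<beta> (var_exp l + m) = adag_mon N \<beta> m"
  unfolding adag_mon_eq_funpow_prod lookup_var_exp_add by (rule funpow_prod_update_notin) auto

lemma sigmaA_eq: "\<sigma> f = (\<Sum>m\<in>keys f. const_poly (lookup f m) * adag_mon N \<beta> m 1)"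
  unfolding sigmaA_def smult_eq_const_poly_mult ..

lemma sigmaA_eq_sum:
  "finite S \<Longrightarrow> keys f \<subseteq> S \<Longrightarrow> \<sigma> f = (\<Sum>m\<in>S. const_poly (lookup f m) * adag_mon N \<beta> m 1)"
  unfolding sigmaA_def smult_eq_const_poly_mult
  by (rule sum.mono_neutral_left) (auto simp: in_keys_iff)

lemma lin_op_sigmaA: "lin_op \<sigma>"
proof (rule lin_opI)
  fix f g :: mpoly
  let ?S = "keys f \<union> keys g"
  have "\<sigma> (f + g) = (\<Sum>m\<in>?S. const_poly (lookup (f + g) m) * adag_mon N \<beta> m 1)"
    by (rule sigmaA_eq_sum) (auto simp: keys_add)
  also have "\<dots> = (\<Sum>m\<in>?S. const_poly (lookup f m) * adag_mon N \<beta> m 1)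
      + (\<Sum>m\<in>?S. const_poly (lookup g m) * adag_mon N \<beta> m 1)"
    by (simp add: lookup_add single_add distrib_right sum.distrib)
  also have "\<dots> = \<sigma> f + \<sigma> g"
    by (simp add: sigmaA_eq_sum[symmetric])
  finally show "\<sigma> (f + g) = \<sigma> f + \<sigma> g" .
next
  fix c and f :: mpoly
  have "keys (const_poly c * f) \<subseteq> keys f"
    by (auto simp: in_keys_iff lookup_const_poly_mult)
  then have "\<sigma> (const_poly c * f) = (\<Sum>m\<in>keys f. const_poly (lookup (const_poly c * f) m) * adag_mon N \<beta> m 1)"
    by (rule sigmaA_eq_sum[OF finite_keys])
  also have "\<dots> = const_poly c * \<sigma> f"
    by (simp add: sigmaA_eq lookup_const_poly_mult const_poly_mult sum_distrib_left mult.assoc)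
  finally show "\<sigma> (const_poly c * f) = const_poly c * \<sigma> f" .
qed

lemma sigmaA_single: "\<sigma> (Poly_Mapping.single m c) = const_poly c * adag_mon N \<beta> m 1"
  by (subst sigmaA_eq_sum[of "{m}"]) auto

lemma sigmaA_const_poly: "\<sigma> (const_poly c) = const_poly c"
  using sigmaA_single[of 0 c] by (simp add: adag_mon_zero)

lemma sigmaA_var_mult_eq_sum:
  "\<sigma> (var l * f) = (\<Sum>m\<in>keys f. const_poly (lookup f m) * adag_mon N \<beta> (var_exp l + m) 1)"
proof -
  have "var l * f = (\<Sum>m\<in>keys f. Poly_Mapping.single (var_exp l + m) (lookup f m))"
    by (subst mpoly_monom_expansion) (simp add: sum_distrib_left var_mult_single)
  then show ?thesis by (simp add: lin_op_sum[OF lin_op_sigmaA] sigmaA_single)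
qed

lemma sigmaA_var_mult:
  assumes "l \<in> {1..N}"
  shows "\<sigma> (var l * f) = adag N \<beta> l (\<sigma> f)"
proof -
  have "\<sigma> (var l * f) = (\<Sum>m\<in>keys f. const_poly (lookup f m) * adag N \<beta> l (adag_mon N \<beta> m 1))"
    by (simp only: sigmaA_var_mult_eq_sum adag_mon_var_exp_add[OF assms] comp_apply)
  also have "\<dots> = adag N \<beta> l (\<sigma> f)"
    by (simp add: sigmaA_eq lin_op_sum[OF lin_op_adag] lin_op_const_poly_mult[OF lin_op_adag])
  finally show ?thesis .
qed

lemma sigmaA_var_mult_notin:
  assumes "l \<notin> {1..N}"
  shows "\<sigma> (var l * f) = \<sigma> f"
  by (simp only: sigmaA_var_mult_eq_sum adag_mon_var_exp_add_notin[OF assms] sigmaA_eq[symmetric])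

lemma sigmaA_swapP:
  assumes "a \<in> {1..N}" "b \<in> {1..N}"
  shows "\<sigma> (swapP a b f) = swapP a b (\<sigma> f)"
proof (induction f rule: mpoly_induct)
  case (const c) then show ?case by (simp add: swapP_const_poly sigmaA_const_poly)
next
  case (add f g) then show ?case by (simp add: lin_op_add[OF lin_op_sigmaA] lin_op_add[OF lin_op_swapP])
next
  case (var l f)
  show ?case
  proof (cases "l \<in> {1..N}")
    case True
    then have "transp a b l \<in> {1..N}" using transp_mem_iff[OF assms] by blast
    with True show ?thesis by (simp add: swapP_var_mult sigmaA_var_mult var.IH swapP_adag[OF assms])
  next
    case False
    then have "transp a b l = l" using assms by (auto intro: transp_other)
    with False show ?thesis by (simp add: swapP_var_mult sigmaA_var_mult_notin var.IH)
  qed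
qed

lemma sigmaA_sum_swapP:
  "j \<in> {1..N} \<Longrightarrow> S \<subseteq> {1..N} \<Longrightarrow> \<sigma> (\<Sum>k\<in>S. swapP j k f) = (\<Sum>k\<in>S. swapP j k (\<sigma> f))"
  unfolding lin_op_sum[OF lin_op_sigmaA] by (intro sum.cong refl sigmaA_swapP) auto

lemma sigmaA_dunkl_commutator:
  assumes "j \<in> {1..N}"
  shows "\<sigma> (dunkl_commutator N \<beta> j l f) = dunkl_commutator N \<beta> j l (\<sigma> f)"
  using assms
  by (auto simp: dunkl_commutator_def lin_op_simps[OF lin_op_sigmaA] sigmaA_swapP sigmaA_sum_swapP)

lemma sigmaA_dunkl:
  assumes "j \<in> {1..N}"
  shows "\<sigma> (D N \<beta> j f) = ann N \<beta> j (\<sigma> f)"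
proof (induction f rule: mpoly_induct)
  case (const c)
  then show ?case by (simp add: dunkl_const_poly sigmaA_const_poly ann_eq lin_op_zero[OF lin_op_sigmaA])
next
  case (add f g)
  then show ?case by (simp add: lin_op_add[OF lin_op_sigmaA] lin_op_add[OF lin_op_ann] lin_op_add[OF lin_op_dunkl])
next
  case (var l f)
  show ?case
  proof (cases "l \<in> {1..N}")
    case True
    then show ?thesis
      by (simp add: dunkl_var_mult lin_op_add[OF lin_op_sigmaA] sigmaA_var_mult var.IH
          sigmaA_dunkl_commutator[OF assms] ann_adag[OF assms])
  next
    case False
    then show ?thesis
      by (simp add: dunkl_var_mult dunkl_commutator_eq_0[OF False assms] sigmaA_var_mult_notin var.IH)
  qed
qed

end

theorem theorem2p4:
  fixes N \<beta> :: nat and Q :: opexp and f :: mpoly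
  assumes "N \<ge> 1"
    and "wf_op N Q"
    and "vars f \<subseteq> {1..N}"
  shows "sigmaA N \<beta> (ev N \<beta> Q f) = ev_rho N \<beta> Q (sigmaA N \<beta> f)"
  using assms(2)
proof (induction Q arbitrary: f)
  case (Cher j)
  then have j: "j \<in> {1..N}" by simp
  then have "{1..<j} \<subseteq> {1..N}" by auto
  with j show ?case
    unfolding ev.simps ev_rho.simps cherednik_def rho_cherednik_def smult_eq_const_poly_mult single_of_nat
    by (simp add: lin_op_simps[OF lin_op_sigmaA] sigmaA_sum_swapP sigmaA_var_mult sigmaA_dunkl)
next
  case (Swp i j) then show ?case by (simp add: sigmaA_swapP)
next
  case (Add a b) then show ?case by (simp add: lin_op_add[OF lin_op_sigmaA])
next
  case (Scal c a) then show ?case by (simp add: smult_eq_const_poly_mult lin_op_const_poly_mult[OF lin_op_sigmaA])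
qed simp_all

end
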